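(* Let $\gamma=(\gamma_1,\dots,\gamma_b)$ be a parallel map on $V=V_1\oplus\cdots\oplus V_b$, $V_i\cong(\mathbb F_2)^m$ with $m\ge4$, and $0\gamma=0$. Suppose every $\gamma_i$ is differentially $4$-uniform and satisfies $\hat n(\gamma_i)=0$. If $\gamma$ maps $\mathcal L(W)$ onto a non-trivial partition $\mathcal{LA}_U(W_1|W_2)$, then $W$ and $W_1$ are walls and $W=W_1=W_2$; in particular $\mathcal{LA}_U(W_1|W_2)$ is linear.
   Context: Let $b>1$, $n=mb$, $V=(\mathbb F_2)^n=V_1\oplus\cdots\oplus V_b$, $V_i\cong(\mathbb F_2)^m$. Permutations act on the right. A parallel map is $\gamma\in\mathrm{Sym}(V)$ with $(v_1\oplus\cdots\oplus v_b)\gamma=v_1\gamma_1\oplus\cdots\oplus v_b\gamma_b$, $\gamma_i\in\mathrm{Sym}(V_i)$. A wall is $\bigoplus_{i\in I}V_i$ with $\emptyset\ne I\subsetneq\{1,\dots,b\}$. For $f:(\mathbb F_2)^m\to(\mathbb F_2)^m$, $\hat f_a(x)=f(x+a)+f(x)$; $f$ is differentially $\delta$-uniform if $\delta=\max_{a\ne0,b}|\{x:\hat f_a(x)=b\}|$; and $\hat n(f)=\max_{a\ne0}|\{v\in(\mathbb F_2)^m\setminus\{0\}: \text{the Boolean function } x\mapsto\langle\hat f_a(x),v\rangle \text{ is constant}\}|$, where $\langle\cdot,\cdot\rangle$ is the standard dot product. A permutation maps $\mathcal A$ onto $\mathcal B$ if it sends the blocks of $\mathcal A$ exactly onto those of $\mathcal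 B$; trivial partitions are the singleton partition and $\{V\}$. $\mathcal L(W)=\{W+v:v\in V\}$ (linear partition). For a subspace $U$ of dimension $n-1$ and subspaces $W_1,W_2\subseteq U$, $\mathcal{LA}_U(W_1|W_2)=\{W_1+v:v\in U\}\cup\{(W_2+\bar v)+v:v\in U\}$ for any $\bar v\in V\setminus U$. *)

theory Defs
  imports Main "HOL-Library.Z2"
begin

text \<open>Vectors of (F_2)^k are modelled as functions nat => bit vanishing from index k on.\<close>

type_synonym vec = "nat \<Rightarrow> bit"

definition Fv :: "nat \<Rightarrow> vec set" where
  "Fv k = {x. \<forall>j\<ge>k. x j = 0}"

definition vadd :: "vec \<Rightarrow> vec \<Rightarrow> vec" where
  "vadd x y = (\<lambda>j. x j + y j)"

definition vzero :: vec where
  "vzero = (\<lambda>j. 0)"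

definition dotp :: "nat \<Rightarrow> vec \<Rightarrow> vec \<Rightarrow> bit" where
  "dotp k x y = (\<Sum>j<k. x j * y j)"

definition subsp :: "nat \<Rightarrow> vec set \<Rightarrow> bool" where
  "subsp k W \<longleftrightarrow> W \<subseteq> Fv k \<and> vzero \<in> W \<and> (\<forall>x\<in>W. \<forall>y\<in>W. vadd x y \<in> W)"

definition sdim :: "vec set \<Rightarrow> nat" where
  "sdim W = (LEAST d. card W = 2 ^ d)"

text \<open>Block i (0-based, i < b) of V = (F_2)^(m*b) occupies coordinates i*m .. i*m+m-1.\<close>
definition blk :: "nat \<Rightarrow> nat \<Rightarrow> vec \<Rightarrow> vec" where
  "blk m i v = (\<lambda>j. if j < m then v (i * m + j) else 0)"

definition par :: "nat \<Rightarrow> nat \<Rightarrow> (nat \<Rightarrow> vec \<Rightarrow> vec) \<Rightarrow> vec \<Rightarrow> vec" where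
  "par m b g v = (\<lambda>j. if j < m * b then g (j div m) (blk m (j div m) v) (j mod m) else 0)"

definition wall :: "nat \<Rightarrow> nat \<Rightarrow> vec set \<Rightarrow> bool" where
  "wall m b W \<longleftrightarrow> (\<exists>I. I \<noteq> {} \<and> I \<subset> {0..<b} \<and>
      W = {v \<in> Fv (m * b). \<forall>j. j div m \<notin> I \<longrightarrow> v j = 0})"

definition fder :: "(vec \<Rightarrow> vec) \<Rightarrow> vec \<Rightarrow> vec \<Rightarrow> vec" where
  "fder f a x = vadd (f (vadd x a)) (f x)"

definition diff_unif :: "nat \<Rightarrow> (vec \<Rightarrow> vec) \<Rightarrow> nat" where
  "diff_unif m f = Max {card {x \<in> Fv m. fder f a x = c} | a c. a \<in> Fv m \<and> a \<noteq> vzero \<and> c \<in> Fv m}"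

definition nhat :: "nat \<Rightarrow> (vec \<Rightarrow> vec) \<Rightarrow> nat" where
  "nhat m f = Max {card {v \<in> Fv m - {vzero}. \<exists>c. \<forall>x\<in>Fv m. dotp m (fder f a x) v = c} | a. a \<in> Fv m \<and> a \<noteq> vzero}"

definition coset :: "vec set \<Rightarrow> vec \<Rightarrow> vec set" where
  "coset W v = (\<lambda>w. vadd w v) ` W"

definition linpart :: "nat \<Rightarrow> vec set \<Rightarrow> vec set set" where
  "linpart n W = {coset W v | v. v \<in> Fv n}"

text \<open>LA_U(W1|W2); the choice of vbar in V - U does not matter.\<close>
definition LApart :: "nat \<Rightarrow> vec set \<Rightarrow> vec set \<Rightarrow> vec set \<Rightarrow> vec set set" where
  "LApart n U W1 W2 = (let vb = (SOME x. x \<in> Fv n - U) in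
      {coset W1 v | v. v \<in> U} \<union> {coset (coset W2 vb) v | v. v \<in> U})"

definition maps_onto :: "(vec \<Rightarrow> vec) \<Rightarrow> vec set set \<Rightarrow> vec set set \<Rightarrow> bool" where
  "maps_onto f A B \<longleftrightarrow> (\<lambda>X. f ` X) ` A = B"

definition trivial_part :: "nat \<Rightarrow> vec set set \<Rightarrow> bool" where
  "trivial_part n P \<longleftrightarrow> P = {{v} | v. v \<in> Fv n} \<or> P = {Fv n}"

end

theory Submission
  imports Defs
begin

(*
  gamma fixes 0 and is parallel, so it maps W, the block of L(W) through 0, onto W1, the block
  of LA_U(W1|W2) through 0. Let I be the set of indices i such that some w in W has nonzero
  component w_i. For x in V_i, gamma(x + w) and gamma(x) lie in one block of LA_U(W1|W2), so the
  derivative gamma(x + w) + gamma(x) lies in U. Off the block V_i this derivative does not depend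
  on x, so the sums of two of them are the sums of two derivatives of gamma_i in direction w_i,
  placed in V_i. Since n-hat(gamma_i) = 0, no nonzero linear form is constant on a derivative of
  gamma_i; hence these sums span V_i, and V_i <= U. Now gamma(x) = gamma_i(x) lies in U, which
  puts the derivatives even into W1, and the same argument gives V_i <= W1. Therefore
  V_I <= W1 = gamma(W) <= gamma(V_I) = V_I, and W = W1 = V_I by counting. A parallel map permutes
  the cosets of V_I, so the partition is L(W); this forces W2 = W, and non-triviality of the
  partition means that I is neither empty nor all of {0..<b}.
*)

section \<open>Vectors over F_2\<close>

(* HOL-Library.Z2 would rewrite + and * on bit into XOR and AND. *)
declare add_bit_eq_xor[simp del] mult_bit_eq_and[simp del]

lemma bit_add_self [simp]: "(x::bit) + x = 0"
  by (cases x) simp_all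

lemma bit_add_eq_0_iff: "(a::bit) + b = 0 \<longleftrightarrow> a = b"
  by (cases a; cases b) simp_all

lemma vzero_apply [simp]: "vzero j = 0"
  by (simp add: vzero_def)

lemma vadd_apply: "vadd x y j = x j + y j"
  by (simp add: vadd_def)

lemma vadd_commute: "vadd x y = vadd y x"
  by (simp add: vadd_def add.commute)

lemma vadd_assoc: "vadd (vadd x y) z = vadd x (vadd y z)"
  by (simp add: vadd_def add.assoc)

lemma vadd_self [simp]: "vadd x x = vzero"
  by (simp add: vadd_def vzero_def)

lemma vadd_vzero [simp]: "vadd x vzero = x" "vadd vzero x = x"
  by (simp_all add: vadd_def vzero_def)

lemma vadd_cancel [simp]: "vadd (vadd x y) y = x" "vadd x (vadd x y) = y"
  by (simp add: vadd_assoc) (simp flip: vadd_assoc)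

lemma vadd_cancel_common [simp]: "vadd (vadd x z) (vadd y z) = vadd x y"
  by (simp add: vadd_assoc vadd_commute[of y z])

lemma Fv_vadd: "x \<in> Fv k \<Longrightarrow> y \<in> Fv k \<Longrightarrow> vadd x y \<in> Fv k"
  by (simp add: Fv_def vadd_def)

lemma vzero_in_Fv [simp]: "vzero \<in> Fv k"
  by (simp add: Fv_def vzero_def)

lemma dotp_vadd_left: "dotp k (vadd x y) z = dotp k x z + dotp k y z"
  by (simp add: dotp_def vadd_def distrib_right sum.distrib)

lemma dotp_Suc: "dotp (Suc k) x y = dotp k x y + x k * y k"
  by (simp add: dotp_def)

lemma Fv_0: "Fv 0 = {vzero}"
  by (auto simp: Fv_def vzero_def)

lemma Fv_Suc_iff: "x \<in> Fv (Suc k) \<longleftrightarrow> x(k := 0) \<in> Fv k"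
  unfolding Fv_def by (auto simp: Suc_le_eq)

lemma Fv_Suc_cases:
  assumes "x \<in> Fv (Suc k)"
  obtains "x k = 0" "x \<in> Fv k" | "x k = 1" "x(k := 0) \<in> Fv k"
  using assms by (cases "x k") (auto simp: Fv_Suc_iff fun_upd_idem)

lemma Fv_Suc_drop: "x \<in> Fv (Suc k) \<Longrightarrow> x k = 0 \<Longrightarrow> x \<in> Fv k"
  by (auto elim: Fv_Suc_cases)

lemma Fv_Suc: "Fv (Suc k) = Fv k \<union> (\<lambda>x. x(k := 1)) ` Fv k"
proof
  show "Fv (Suc k) \<subseteq> Fv k \<union> (\<lambda>x. x(k := 1)) ` Fv k"
  proof
    fix x assume "x \<in> Fv (Suc k)"
    then show "x \<in> Fv k \<union> (\<lambda>x. x(k := 1)) ` Fv k"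
    proof (cases rule: Fv_Suc_cases)
      case 2
      then have "x = (x(k := 0))(k := 1)" by auto
      with 2 show ?thesis by blast
    qed simp
  qed
qed (auto simp: Fv_def)

lemma finite_Fv [simp]: "finite (Fv k)"
  by (induction k) (auto simp: Fv_Suc Fv_0)

lemma card_Fv: "card (Fv k) = 2 ^ k"
proof (induction k)
  case (Suc k)
  have "inj_on (\<lambda>x. x(k := 1)) (Fv k)"
  proof (rule inj_onI)
    fix x y assume "x \<in> Fv k" "y \<in> Fv k" "x(k := 1) = y(k := 1)"
    then have "x j = y j" for j
      by (cases "j = k") (auto simp: Fv_def dest: fun_cong[of _ _ j])
    then show "x = y" by blast
  qed
  then have "card ((\<lambda>x. x(k := 1)) ` Fv k) = 2 ^ k"
    using Suc by (simp add: card_image)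
  moreover have "Fv k \<inter> (\<lambda>x. x(k := 1)) ` Fv k = {}"
    by (auto simp: Fv_def)
  ultimately show ?case
    by (simp add: Fv_Suc card_Un_disjoint Suc)
qed (simp add: Fv_0)

lemma sdim_Fv: "sdim (Fv k) = k"
  unfolding sdim_def card_Fv by (rule Least_equality) auto

lemma subsp_subset: "subsp k S \<Longrightarrow> S \<subseteq> Fv k"
  by (simp add: subsp_def)

lemma subsp_vzero: "subsp k S \<Longrightarrow> vzero \<in> S"
  by (simp add: subsp_def)

lemma subsp_vadd: "subsp k S \<Longrightarrow> x \<in> S \<Longrightarrow> y \<in> S \<Longrightarrow> vadd x y \<in> S"
  by (simp add: subsp_def)

lemma subsp_Fv: "subsp k (Fv k)"
  by (simp add: subsp_def Fv_vadd)

lemma finite_subsp: "subsp k S \<Longrightarrow> finite S"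
  by (meson finite_Fv finite_subset subsp_subset)

section \<open>Annihilators of proper subspaces\<close>

lemma subsp_slice:
  assumes "subsp (Suc k) S"
  shows "subsp k {s \<in> S. s k = 0}"
  unfolding subsp_def
proof (intro conjI ballI)
  show "{s \<in> S. s k = 0} \<subseteq> Fv k" using subsp_subset[OF assms] Fv_Suc_drop by blast
qed (use assms in \<open>auto simp: subsp_vzero subsp_vadd vadd_apply\<close>)

lemma subsp_eq_Fv_if_slice_eq_Fv:
  assumes S: "subsp (Suc k) S" and t: "t \<in> S" "t k = 1" and slice: "{s \<in> S. s k = 0} = Fv k"
  shows "S = Fv (Suc k)"
proof
  show "Fv (Suc k) \<subseteq> S"
  proof
    fix z assume z: "z \<in> Fv (Suc k)"
    show "z \<in> S"
    proof (cases "z k = 0")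
      case True
      with z slice show ?thesis by (auto dest: Fv_Suc_drop)
    next
      case False
      have "vadd z t \<in> Fv (Suc k)" using z t S Fv_vadd subsp_subset by blast
      moreover have "vadd z t k = 0" using False t by (simp add: vadd_apply)
      ultimately have "vadd z t \<in> S" using slice by (auto dest: Fv_Suc_drop)
      then have "vadd (vadd z t) t \<in> S" using S t subsp_vadd by blast
      then show ?thesis by simp
    qed
  qed
qed (fact subsp_subset[OF S])

lemma dotp_fun_upd_self: "dotp k x (y(k := c)) = dotp k x y"
  by (auto simp: dotp_def intro!: sum.cong)

lemma annihilator_extend:
  assumes S: "subsp (Suc k) S" and t: "t \<in> S" "t k = 1"
    and y: "y \<in> Fv k" "y \<noteq> vzero" and ann: "\<forall>s\<in>S. s k = 0 \<longrightarrow> dotp k s y = 0"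
  defines "y' \<equiv> y(k := dotp k t y)"
  shows "y' \<in> Fv (Suc k) - {vzero}" and "\<forall>s\<in>S. dotp (Suc k) s y' = 0"
proof -
  show "y' \<in> Fv (Suc k) - {vzero}"
    using y by (auto simp: y'_def Fv_def vzero_def fun_eq_iff split: if_splits)
  show "\<forall>s\<in>S. dotp (Suc k) s y' = 0"
  proof
    fix s assume s: "s \<in> S"
    show "dotp (Suc k) s y' = 0"
    proof (cases "s k = 0")
      case True
      with s ann show ?thesis by (simp add: y'_def dotp_Suc dotp_fun_upd_self)
    next
      case False
      have "vadd s t \<in> S" "vadd s t k = 0"
        using S s t False by (simp_all add: subsp_vadd vadd_apply)
      then have "dotp k s y + dotp k t y = 0"
        using ann[rule_format, of "vadd s t"] by (simp add: dotp_vadd_left)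
      with False show ?thesis by (simp add: y'_def dotp_Suc dotp_fun_upd_self)
    qed
  qed
qed

lemma proper_subsp_annihilator:
  "subsp k S \<Longrightarrow> S \<noteq> Fv k \<Longrightarrow> \<exists>y\<in>Fv k - {vzero}. \<forall>s\<in>S. dotp k s y = 0"
proof (induction k arbitrary: S)
  case 0
  then show ?case by (auto simp: subsp_def Fv_0)
next
  case (Suc k)
  show ?case
  proof (cases "\<exists>t\<in>S. t k = 1")
    case False
    then have "\<forall>s\<in>S. s k = 0" by auto
    moreover have "vzero(k := 1) \<in> Fv (Suc k) - {vzero}"
      by (auto simp: Fv_def vzero_def fun_eq_iff)
    ultimately show ?thesis
      by (intro bexI[of _ "vzero(k := 1)"]) (auto simp: dotp_Suc dotp_fun_upd_self dotp_def)
  next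
    case True
    then obtain t where t: "t \<in> S" "t k = 1" by blast
    have "{s \<in> S. s k = 0} \<noteq> Fv k"
      using subsp_eq_Fv_if_slice_eq_Fv[OF Suc.prems(1) t] Suc.prems(2) by blast
    with Suc.IH[OF subsp_slice[OF Suc.prems(1)]] obtain y
      where "y \<in> Fv k - {vzero}" "\<forall>s\<in>S. s k = 0 \<longrightarrow> dotp k s y = 0" by blast
    with annihilator_extend[OF Suc.prems(1) t] show ?thesis by blast
  qed
qed

lemma nhat_pos:
  assumes "a \<in> Fv m" "a \<noteq> vzero" "v \<in> Fv m - {vzero}"
    and "\<forall>x\<in>Fv m. dotp m (fder f a x) v = c"
  shows "nhat m f > 0"
proof -
  let ?A = "\<lambda>a. {v \<in> Fv m - {vzero}. \<exists>c. \<forall>x\<in>Fv m. dotp m (fder f a x) v = c}"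
  have "finite (?A a)" by (rule finite_subset[of _ "Fv m"]) auto
  moreover have "v \<in> ?A a" using assms(3,4) by blast
  ultimately have "card (?A a) > 0" by (auto simp: card_gt_0_iff)
  moreover have "card (?A a) \<le> nhat m f"
    unfolding nhat_def
  proof (rule Max_ge)
    have "finite {a. a \<in> Fv m \<and> a \<noteq> vzero}" by (rule finite_subset[of _ "Fv m"]) auto
    then show "finite {card (?A a) | a. a \<in> Fv m \<and> a \<noteq> vzero}" by (rule finite_image_set)
  qed (use assms in blast)
  ultimately show ?thesis by linarith
qed

lemma nhat_zero_derivative_span:
  assumes nh: "nhat m f = 0" and a: "a \<in> Fv m" "a \<noteq> vzero" and S: "subsp m S"
    and D: "\<And>x x'. x \<in> Fv m \<Longrightarrow> x' \<in> Fv m \<Longrightarrow> vadd (fder f a x) (fder f a x') \<in> S"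
  shows "S = Fv m"
proof (rule ccontr)
  assume "S \<noteq> Fv m"
  then obtain v where v: "v \<in> Fv m - {vzero}" and ann: "\<forall>s\<in>S. dotp m s v = 0"
    using proper_subsp_annihilator[OF S] by blast
  have "\<forall>x\<in>Fv m. dotp m (fder f a x) v = dotp m (fder f a vzero) v"
  proof
    fix x assume "x \<in> Fv m"
    then have "dotp m (vadd (fder f a x) (fder f a vzero)) v = 0"
      using ann D[of x vzero] by simp
    then show "dotp m (fder f a x) v = dotp m (fder f a vzero) v"
      by (simp add: dotp_vadd_left bit_add_eq_0_iff)
  qed
  from nhat_pos[OF a v this] nh show False by simp
qed

section \<open>Cosets and the partitions LA_U(W1|W2)\<close>

lemma coset_mem: "x \<in> coset A p \<longleftrightarrow> vadd x p \<in> A"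
  by (force simp: coset_def)

lemma coset_coset: "coset (coset A p) q = coset A (vadd p q)"
  unfolding coset_def image_image by (simp add: vadd_assoc)

lemma coset_subsp_self: "subsp k A \<Longrightarrow> u \<in> A \<Longrightarrow> coset A u = A"
  using subsp_vadd[of k A] by (auto simp: coset_mem) (metis vadd_cancel(1))

lemma card_coset: "card (coset A v) = card A"
  unfolding coset_def by (rule card_image) (metis inj_onI vadd_cancel(1))

lemma coset_subset_Fv: "subsp k A \<Longrightarrow> v \<in> Fv k \<Longrightarrow> coset A v \<subseteq> Fv k"
  unfolding coset_def using Fv_vadd subsp_subset by blast

lemma subsp_eq_if_cosets_eq:
  assumes A: "subsp k A" and B: "subsp k B" and eq: "coset A p = coset B q"
  shows "A = B"
proof -
  have sub: "X \<subseteq> Y" if X: "subsp k X" and Y: "subsp k Y" and "coset X x = coset Y y" for X Y x y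
  proof
    have "x \<in> coset X x" using subsp_vzero[OF X] by (simp add: coset_mem)
    then have "vadd x y \<in> Y" using \<open>coset X x = coset Y y\<close> by (simp add: coset_mem)
    fix z assume "z \<in> X"
    then have "vadd z x \<in> coset X x" by (simp add: coset_mem)
    then have "vadd (vadd z x) y \<in> Y" using \<open>coset X x = coset Y y\<close> by (simp add: coset_mem)
    with \<open>vadd x y \<in> Y\<close> have "vadd (vadd (vadd z x) y) (vadd x y) \<in> Y"
      using subsp_vadd[OF Y] by blast
    then show "z \<in> Y" by (simp add: vadd_assoc)
  qed
  show ?thesis using sub[OF A B eq] sub[OF B A eq[symmetric]] by blast
qed

definition LApart_at :: "vec set \<Rightarrow> vec set \<Rightarrow> vec set \<Rightarrow> vec \<Rightarrow> vec set set" where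
  "LApart_at U W1 W2 vb = {coset W1 v | v. v \<in> U} \<union> {coset (coset W2 vb) v | v. v \<in> U}"

lemma LApart_eq_LApart_at:
  assumes "subsp n U" "sdim U = n - 1" "0 < n"
  obtains vb where "vb \<in> Fv n - U" "LApart n U W1 W2 = LApart_at U W1 W2 vb"
proof -
  have "U \<noteq> Fv n" using assms(2,3) sdim_Fv[of n] by auto
  then have "\<exists>x. x \<in> Fv n - U" using subsp_subset[OF assms(1)] by blast
  then have "(SOME x. x \<in> Fv n - U) \<in> Fv n - U" by (rule someI_ex)
  with that show ?thesis by (simp add: LApart_def LApart_at_def Let_def)
qed

locale LA_partition =
  fixes n :: nat and U W1 W2 :: "vec set" and vb :: vec
  assumes U: "subsp n U" and W1: "subsp n W1" "W1 \<subseteq> U" and W2: "subsp n W2" "W2 \<subseteq> U"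
    and vb: "vb \<notin> U"
begin

lemma LApart_at_blockE:
  assumes "B \<in> LApart_at U W1 W2 vb"
  obtains u where "u \<in> U" "B = coset W1 u"
  | u where "u \<in> U" "B = coset W2 (vadd vb u)" "B \<inter> U = {}"
proof -
  consider u where "u \<in> U" "B = coset W1 u" | u where "u \<in> U" "B = coset W2 (vadd vb u)"
    using assms unfolding LApart_at_def by (auto simp: coset_coset)
  then show ?thesis
  proof cases
    case (2 u)
    have "B \<inter> U = {}"
    proof (rule ccontr)
      assume "B \<inter> U \<noteq> {}"
      then obtain p where "p \<in> B" "p \<in> U" by blast
      moreover have "vadd p (vadd vb u) \<in> U" using 2 W2(2) \<open>p \<in> B\<close> by (auto simp: coset_mem)
      ultimately have "vadd (vadd p (vadd p (vadd vb u))) u \<in> U"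
        using U \<open>u \<in> U\<close> by (meson subsp_vadd)
      with vb show False by simp
    qed
    with 2 that show ?thesis by blast
  qed (use that in blast)
qed

lemma LApart_at_block_vadd:
  assumes "B \<in> LApart_at U W1 W2 vb" "p \<in> B" "q \<in> B"
  shows "vadd p q \<in> U" and "p \<in> U \<Longrightarrow> vadd p q \<in> W1"
proof -
  have "vadd p q \<in> W1 \<and> vadd p q \<in> U \<or> vadd p q \<in> W2 \<and> p \<notin> U"
    using assms(1)
  proof (cases rule: LApart_at_blockE)
    case (1 u)
    then have "vadd p u \<in> W1" "vadd q u \<in> W1" using assms(2,3) by (simp_all add: coset_mem)
    then have "vadd (vadd p u) (vadd q u) \<in> W1" by (rule subsp_vadd[OF W1(1)])
    then show ?thesis using W1(2) by auto
  next
    case (2 u)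
    then have "vadd p (vadd vb u) \<in> W2" "vadd q (vadd vb u) \<in> W2"
      using assms(2,3) by (simp_all add: coset_mem)
    then have "vadd (vadd p (vadd vb u)) (vadd q (vadd vb u)) \<in> W2" by (rule subsp_vadd[OF W2(1)])
    then show ?thesis using 2 assms(2) by auto
  qed
  then show "vadd p q \<in> U" and "p \<in> U \<Longrightarrow> vadd p q \<in> W1" using W2(2) by auto
qed

lemma LApart_at_block_vzero:
  assumes "B \<in> LApart_at U W1 W2 vb" "vzero \<in> B"
  shows "B = W1"
  using assms(1)
proof (cases rule: LApart_at_blockE)
  case (1 u)
  then have "u \<in> W1" using assms(2) by (simp add: coset_mem)
  with 1 W1(1) show ?thesis by (simp add: coset_subsp_self)
next
  case 2
  then show ?thesis using assms(2) subsp_vzero[OF U] by blast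
qed

lemma coset_W2_in_LApart_at: "coset W2 vb \<in> LApart_at U W1 W2 vb"
proof -
  have "coset W2 vb = coset (coset W2 vb) vzero" by (simp add: coset_coset)
  then show ?thesis using subsp_vzero[OF U] unfolding LApart_at_def by blast
qed

end

section \<open>Blocks and parallel maps\<close>

lemma less_mult_iff_div_less: "0 < m \<Longrightarrow> j < m * b \<longleftrightarrow> j div m < (b::nat)"
  by (simp add: div_less_iff_less_mult mult.commute)

lemma mult_le_iff_le_div: "0 < m \<Longrightarrow> m * b \<le> j \<longleftrightarrow> b \<le> j div (m::nat)"
  by (simp add: less_eq_div_iff_mult_less_eq mult.commute)

definition block_embed :: "nat \<Rightarrow> nat \<Rightarrow> vec \<Rightarrow> vec" where
  "block_embed m i x = (\<lambda>j. if j div m = i then x (j mod m) else 0)"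

definition block_sum :: "nat \<Rightarrow> nat \<Rightarrow> nat set \<Rightarrow> vec set" where
  "block_sum m b I = {v \<in> Fv (m * b). \<forall>j. j div m \<notin> I \<longrightarrow> v j = 0}"

definition block_support :: "nat \<Rightarrow> nat \<Rightarrow> vec set \<Rightarrow> nat set" where
  "block_support m b W = {i. i < b \<and> (\<exists>w\<in>W. blk m i w \<noteq> vzero)}"

lemma blk_Fv: "blk m i v \<in> Fv m"
  by (simp add: blk_def Fv_def)

lemma blk_vadd: "blk m i (vadd v w) = vadd (blk m i v) (blk m i w)"
  by (simp add: blk_def vadd_def fun_eq_iff)

lemma blk_vzero [simp]: "blk m i vzero = vzero"
  by (simp add: blk_def fun_eq_iff)

lemma blk_div_mod: "0 < m \<Longrightarrow> blk m (j div m) v (j mod m) = v j"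
  by (simp add: blk_def)

lemma blk_block_embed:
  "0 < m \<Longrightarrow> x \<in> Fv m \<Longrightarrow> blk m k (block_embed m i x) = (if k = i then x else vzero)"
  by (auto simp: blk_def block_embed_def Fv_def fun_eq_iff)

lemma block_embed_Fv: "0 < m \<Longrightarrow> i < b \<Longrightarrow> block_embed m i x \<in> Fv (m * b)"
  by (auto simp: block_embed_def Fv_def mult_le_iff_le_div)

lemma block_embed_vadd:
  "block_embed m i (vadd x y) = vadd (block_embed m i x) (block_embed m i y)"
  by (simp add: block_embed_def vadd_def fun_eq_iff)

lemma block_embed_vzero: "block_embed m i vzero = vzero"
  by (simp add: block_embed_def fun_eq_iff)

lemma Fv_blk_eqI:
  assumes "0 < m" "v \<in> Fv (m * b)" "w \<in> Fv (m * b)" "\<And>i. i < b \<Longrightarrow> blk m i v = blk m i w"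
  shows "v = w"
proof
  fix j show "v j = w j"
  proof (cases "j < m * b")
    case True
    then have "blk m (j div m) v (j mod m) = blk m (j div m) w (j mod m)"
      using assms(4) by (simp add: less_mult_iff_div_less[OF assms(1)])
    then show ?thesis by (simp add: blk_div_mod[OF assms(1)])
  qed (use assms(2,3) in \<open>simp add: Fv_def\<close>)
qed

lemma par_Fv: "par m b g v \<in> Fv (m * b)"
  by (simp add: par_def Fv_def)

lemma blk_par:
  assumes "0 < m" "i < b" "g i (blk m i v) \<in> Fv m"
  shows "blk m i (par m b g v) = g i (blk m i v)"
proof
  fix j show "blk m i (par m b g v) j = g i (blk m i v) j"
  proof (cases "j < m")
    case True
    then have "i * m + j < m * b" using assms(1,2) by (simp add: less_mult_iff_div_less)
    with True show ?thesis by (simp add: blk_def par_def)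
  qed (use assms(3) in \<open>simp add: blk_def Fv_def\<close>)
qed

lemma mem_block_sum_iff:
  assumes "0 < m"
  shows "v \<in> block_sum m b I \<longleftrightarrow> v \<in> Fv (m * b) \<and> (\<forall>k<b. k \<notin> I \<longrightarrow> blk m k v = vzero)"
proof (cases "v \<in> Fv (m * b)")
  case True
  have "(\<forall>j. j div m \<notin> I \<longrightarrow> v j = 0) \<longleftrightarrow> (\<forall>k<b. k \<notin> I \<longrightarrow> blk m k v = vzero)"
  proof (intro iffI allI impI)
    fix j assume blocks: "\<forall>k<b. k \<notin> I \<longrightarrow> blk m k v = vzero" and "j div m \<notin> I"
    show "v j = 0"
    proof (cases "j div m < b")
      case True
      then have "blk m (j div m) v (j mod m) = 0" using blocks \<open>j div m \<notin> I\<close> by simp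
      then show ?thesis by (simp add: blk_div_mod[OF assms])
    qed (use \<open>v \<in> Fv (m * b)\<close> in \<open>simp add: Fv_def mult_le_iff_le_div[OF assms]\<close>)
  qed (auto simp: blk_def fun_eq_iff assms)
  with True show ?thesis by (simp add: block_sum_def)
qed (simp add: block_sum_def)

lemma subsp_block_sum: "subsp (m * b) (block_sum m b I)"
  by (auto simp: subsp_def block_sum_def Fv_vadd vadd_apply)

lemma block_sum_empty: "block_sum m b {} = {vzero}"
  by (auto simp: block_sum_def fun_eq_iff)

lemma block_sum_all: "0 < m \<Longrightarrow> block_sum m b {0..<b} = Fv (m * b)"
  by (auto simp: block_sum_def Fv_def mult_le_iff_le_div)

lemma subset_block_sum_block_support:
  "0 < m \<Longrightarrow> W \<subseteq> Fv (m * b) \<Longrightarrow> W \<subseteq> block_sum m b (block_support m b W)"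
  by (auto simp: mem_block_sum_iff block_support_def)

lemma subsp_block_embed_preimage:
  "subsp (m * b) S \<Longrightarrow> subsp m {z \<in> Fv m. block_embed m i z \<in> S}"
  by (auto simp: subsp_def block_embed_vadd block_embed_vzero Fv_vadd)

lemma block_sum_subset_subsp:
  assumes m: "0 < m" and "finite J" and S: "subsp (m * b) S"
    and blocks: "\<And>i z. i \<in> J \<Longrightarrow> z \<in> Fv m \<Longrightarrow> block_embed m i z \<in> S"
  shows "block_sum m b J \<subseteq> S"
  using \<open>finite J\<close> blocks
proof (induction J rule: finite_induct)
  case empty
  then show ?case using subsp_vzero[OF S] by (simp add: block_sum_empty)
next
  case (insert i J)
  show ?case
  proof
    fix v assume v: "v \<in> block_sum m b (insert i J)"
    define v' where "v' = (\<lambda>j. if j div m = i then 0 else v j)"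
    have "v' \<in> block_sum m b J" using v by (auto simp: block_sum_def v'_def Fv_def)
    then have "vadd v' (block_embed m i (blk m i v)) \<in> S"
      using insert by (intro subsp_vadd[OF S]) (auto simp: blk_Fv)
    moreover have "vadd v' (block_embed m i (blk m i v)) = v"
      using blk_div_mod[OF m, of _ v] by (auto simp: fun_eq_iff vadd_def v'_def block_embed_def)
    ultimately show "v \<in> S" by simp
  qed
qed

lemma g_vzero_if_par_vzero:
  assumes "0 < m" "i < b" "g i vzero \<in> Fv m" "par m b g vzero = vzero"
  shows "g i vzero = vzero"
  using blk_par[of m i b g vzero] assms by simp

locale parallel_perm =
  fixes m b :: nat and g :: "nat \<Rightarrow> vec \<Rightarrow> vec"
  assumes m_pos: "0 < m"
    and bij: "\<And>i. i < b \<Longrightarrow> bij_betw (g i) (Fv m) (Fv m)"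
    and g_vzero: "\<And>i. i < b \<Longrightarrow> g i vzero = vzero"
begin

lemma g_Fv: "i < b \<Longrightarrow> x \<in> Fv m \<Longrightarrow> g i x \<in> Fv m"
  using bij bij_betwE by blast

lemma blk_par_eq: "i < b \<Longrightarrow> blk m i (par m b g v) = g i (blk m i v)"
  by (simp add: blk_par m_pos g_Fv blk_Fv)

lemma par_block_embed:
  "i < b \<Longrightarrow> x \<in> Fv m \<Longrightarrow> par m b g (block_embed m i x) = block_embed m i (g i x)"
  by (rule Fv_blk_eqI[OF m_pos par_Fv block_embed_Fv[OF m_pos]])
    (simp_all add: blk_par_eq blk_block_embed m_pos g_Fv g_vzero)

lemma par_vzero: "par m b g vzero = vzero"
  by (rule Fv_blk_eqI[OF m_pos par_Fv]) (simp_all add: blk_par_eq g_vzero)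

lemma inj_on_par: "inj_on (par m b g) (Fv (m * b))"
proof (rule inj_onI)
  fix v w assume v: "v \<in> Fv (m * b)" and w: "w \<in> Fv (m * b)"
    and eq: "par m b g v = par m b g w"
  have "blk m i v = blk m i w" if "i < b" for i
    using arg_cong[OF eq, of "blk m i"] bij[OF that] blk_Fv
    by (simp add: blk_par_eq that bij_betw_def inj_on_def)
  then show "v = w" by (rule Fv_blk_eqI[OF m_pos v w])
qed

lemma par_image_Fv: "par m b g ` Fv (m * b) = Fv (m * b)"
  by (rule card_subset_eq) (auto simp: par_Fv card_image[OF inj_on_par])

lemma par_block_sum: "v \<in> block_sum m b I \<Longrightarrow> par m b g v \<in> block_sum m b I"
  by (simp add: mem_block_sum_iff m_pos par_Fv blk_par_eq g_vzero)

lemma par_difference_block_sum: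
  assumes "y \<in> block_sum m b I"
  shows "vadd (par m b g (vadd y v)) (par m b g v) \<in> block_sum m b I"
  using assms by (simp add: mem_block_sum_iff m_pos par_Fv Fv_vadd blk_vadd blk_par_eq)

lemma par_image_coset_block_sum:
  assumes v: "v \<in> Fv (m * b)"
  shows "par m b g ` coset (block_sum m b I) v = coset (block_sum m b I) (par m b g v)"
proof (rule card_subset_eq)
  show "finite (coset (block_sum m b I) (par m b g v))"
    unfolding coset_def using finite_subsp[OF subsp_block_sum] by blast
  show "par m b g ` coset (block_sum m b I) v \<subseteq> coset (block_sum m b I) (par m b g v)"
    by (auto simp: coset_def[of _ v] coset_mem par_difference_block_sum)
  have "inj_on (par m b g) (coset (block_sum m b I) v)"
    using inj_on_subset[OF inj_on_par coset_subset_Fv[OF subsp_block_sum v]] .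
  then show "card (par m b g ` coset (block_sum m b I) v)
    = card (coset (block_sum m b I) (par m b g v))"
    by (simp add: card_image card_coset)
qed

lemma maps_onto_par_linpart_block_sum:
  "maps_onto (par m b g) (linpart (m * b) (block_sum m b I)) (linpart (m * b) (block_sum m b I))"
  unfolding maps_onto_def
proof
  show "(\<lambda>X. par m b g ` X) ` linpart (m * b) (block_sum m b I)
    \<subseteq> linpart (m * b) (block_sum m b I)"
    by (auto simp: linpart_def par_image_coset_block_sum) (use par_Fv in blast)
  show "linpart (m * b) (block_sum m b I)
    \<subseteq> (\<lambda>X. par m b g ` X) ` linpart (m * b) (block_sum m b I)"
  proof
    fix X assume "X \<in> linpart (m * b) (block_sum m b I)"
    then obtain v where v: "v \<in> Fv (m * b)" "X = coset (block_sum m b I) (par m b g v)"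
      using par_image_Fv by (auto simp: linpart_def) (metis imageE)
    then have "X = par m b g ` coset (block_sum m b I) v" by (simp add: par_image_coset_block_sum)
    moreover have "coset (block_sum m b I) v \<in> linpart (m * b) (block_sum m b I)"
      using v by (auto simp: linpart_def)
    ultimately show "X \<in> (\<lambda>X. par m b g ` X) ` linpart (m * b) (block_sum m b I)" by blast
  qed
qed

lemma fder_g_Fv: "i < b \<Longrightarrow> a \<in> Fv m \<Longrightarrow> x \<in> Fv m \<Longrightarrow> fder (g i) a x \<in> Fv m"
  by (simp add: fder_def Fv_vadd g_Fv)

lemma blk_par_derivative_block_embed:
  assumes "i < b" "k < b" "x \<in> Fv m"
  shows "blk m k (fder (par m b g) w (block_embed m i x))
       = (if k = i then fder (g i) (blk m i w) x else g k (blk m k w))"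
  using assms by (simp add: fder_def blk_vadd blk_par_eq blk_block_embed m_pos g_vzero)

lemma par_derivative_block_embed_pair:
  assumes "i < b" "x \<in> Fv m" "x' \<in> Fv m"
  shows "vadd (fder (par m b g) w (block_embed m i x)) (fder (par m b g) w (block_embed m i x'))
       = block_embed m i (vadd (fder (g i) (blk m i w) x) (fder (g i) (blk m i w) x'))"
proof (rule Fv_blk_eqI[OF m_pos _ block_embed_Fv[OF m_pos assms(1)]])
  show "vadd (fder (par m b g) w (block_embed m i x)) (fder (par m b g) w (block_embed m i x'))
    \<in> Fv (m * b)"
    by (simp add: fder_def Fv_vadd par_Fv)
  show "blk m k (vadd (fder (par m b g) w (block_embed m i x))
                      (fder (par m b g) w (block_embed m i x')))
      = blk m k (block_embed m i (vadd (fder (g i) (blk m i w) x) (fder (g i) (blk m i w) x')))"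
    if "k < b" for k
    using assms that
    by (simp add: blk_vadd[of m k "fder _ _ _"] blk_par_derivative_block_embed blk_block_embed
        m_pos Fv_vadd fder_g_Fv blk_Fv)
qed

lemma block_embed_mem_if_derivatives_mem:
  assumes i: "i < b" and nh: "nhat m (g i) = 0" and w: "blk m i w \<noteq> vzero"
    and S: "subsp (m * b) S"
    and D: "\<And>x. x \<in> Fv m \<Longrightarrow> fder (par m b g) w (block_embed m i x) \<in> S"
    and z: "z \<in> Fv m"
  shows "block_embed m i z \<in> S"
proof -
  have "{z \<in> Fv m. block_embed m i z \<in> S} = Fv m"
  proof (rule nhat_zero_derivative_span[OF nh blk_Fv w subsp_block_embed_preimage[OF S]])
    fix x x' assume x: "x \<in> Fv m" "x' \<in> Fv m"
    have "block_embed m i (vadd (fder (g i) (blk m i w) x) (fder (g i) (blk m i w) x')) \<in> S"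
      using subsp_vadd[OF S D[OF x(1)] D[OF x(2)]]
      by (simp add: par_derivative_block_embed_pair[OF i x])
    moreover have "vadd (fder (g i) (blk m i w) x) (fder (g i) (blk m i w) x') \<in> Fv m"
      using x by (simp add: Fv_vadd fder_g_Fv[OF i blk_Fv])
    ultimately show "vadd (fder (g i) (blk m i w) x) (fder (g i) (blk m i w) x')
      \<in> {z \<in> Fv m. block_embed m i z \<in> S}"
      by blast
  qed
  with z show ?thesis by blast
qed

end

section \<open>Parallel maps sending L(W) onto LA_U(W1|W2)\<close>

locale LA_image = parallel_perm m b g + LA_partition "m * b" U W1 W2 vb
  for m b g U W1 W2 vb +
  fixes W :: "vec set"
  assumes W: "subsp (m * b) W"
    and nhat_zero: "\<And>i. i < b \<Longrightarrow> nhat m (g i) = 0"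
    and maps: "maps_onto (par m b g) (linpart (m * b) W) (LApart_at U W1 W2 vb)"
begin

lemma par_image_coset_in_LApart_at:
  assumes "v \<in> Fv (m * b)"
  shows "par m b g ` coset W v \<in> LApart_at U W1 W2 vb"
proof -
  have "coset W v \<in> linpart (m * b) W" using assms by (auto simp: linpart_def)
  then show ?thesis using maps unfolding maps_onto_def by blast
qed

lemma par_image_W: "par m b g ` W = W1"
proof (rule LApart_at_block_vzero)
  show "par m b g ` W \<in> LApart_at U W1 W2 vb"
    using par_image_coset_in_LApart_at[of vzero]
    by (simp add: coset_subsp_self[OF W subsp_vzero[OF W]])
  show "vzero \<in> par m b g ` W"
    using par_vzero subsp_vzero[OF W] by force
qed

lemma block_embed_mem_W1:
  assumes "i \<in> block_support m b W" "z \<in> Fv m"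
  shows "block_embed m i z \<in> W1"
proof -
  obtain w where i: "i < b" and w: "w \<in> W" "blk m i w \<noteq> vzero"
    using assms(1) by (auto simp: block_support_def)
  define B where "B x = par m b g ` coset W (block_embed m i x)" for x
  have B: "B x \<in> LApart_at U W1 W2 vb"
    and p: "par m b g (vadd (block_embed m i x) w) \<in> B x"
    and q: "par m b g (block_embed m i x) \<in> B x" if "x \<in> Fv m" for x
  proof -
    show "B x \<in> LApart_at U W1 W2 vb"
      unfolding B_def by (rule par_image_coset_in_LApart_at[OF block_embed_Fv[OF m_pos i]])
    have "vadd (block_embed m i x) w \<in> coset W (block_embed m i x)"
      and "block_embed m i x \<in> coset W (block_embed m i x)"
      using w(1) subsp_vzero[OF W] by (simp_all add: coset_mem vadd_commute[of "block_embed m i x"])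
    then show "par m b g (vadd (block_embed m i x) w) \<in> B x" "par m b g (block_embed m i x) \<in> B x"
      unfolding B_def by blast+
  qed
  have "fder (par m b g) w (block_embed m i x) \<in> U" if "x \<in> Fv m" for x
    using LApart_at_block_vadd(1)[OF B[OF that] p[OF that] q[OF that]] by (simp add: fder_def)
  then have "block_embed m i z' \<in> U" if "z' \<in> Fv m" for z'
    by (rule block_embed_mem_if_derivatives_mem[OF i nhat_zero[OF i] w(2) U _ that])
  then have "par m b g (block_embed m i x) \<in> U" if "x \<in> Fv m" for x
    using that by (simp add: par_block_embed[OF i] g_Fv[OF i])
  then have "fder (par m b g) w (block_embed m i x) \<in> W1" if "x \<in> Fv m" for x
    using LApart_at_block_vadd(2)[OF B q p] that by (simp add: fder_def vadd_commute)
  then show ?thesis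
    by (rule block_embed_mem_if_derivatives_mem[OF i nhat_zero[OF i] w(2) W1(1) _ assms(2)])
qed

lemma W1_eq_block_sum: "W1 = block_sum m b (block_support m b W)"
proof
  have "finite (block_support m b W)"
    by (rule finite_subset[of _ "{..<b}"]) (auto simp: block_support_def)
  then show "block_sum m b (block_support m b W) \<subseteq> W1"
    by (rule block_sum_subset_subsp[OF m_pos _ W1(1) block_embed_mem_W1])
  have "par m b g ` W \<subseteq> block_sum m b (block_support m b W)"
    using subset_block_sum_block_support[OF m_pos subsp_subset[OF W]] by (auto intro: par_block_sum)
  then show "W1 \<subseteq> block_sum m b (block_support m b W)"
    by (simp add: par_image_W)
qed

lemma W_eq_W1: "W = W1"
proof (rule card_subset_eq)
  show "finite W1" by (rule finite_subsp[OF W1(1)])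
  show "W \<subseteq> W1"
    using W1_eq_block_sum subset_block_sum_block_support[OF m_pos subsp_subset[OF W]] by simp
  show "card W = card W1"
    using card_image[OF inj_on_subset[OF inj_on_par subsp_subset[OF W]]] par_image_W by simp
qed

lemma W_eq_block_sum: "W = block_sum m b (block_support m b W)"
  using W_eq_W1 W1_eq_block_sum by simp

lemma LApart_at_eq_linpart: "LApart_at U W1 W2 vb = linpart (m * b) W"
  using maps maps_onto_par_linpart_block_sum[of "block_support m b W"]
  unfolding maps_onto_def by (simp flip: W_eq_block_sum)

lemma W2_eq_W: "W2 = W"
proof -
  obtain z where "coset W2 vb = coset W z"
    using coset_W2_in_LApart_at by (auto simp: LApart_at_eq_linpart linpart_def)
  then show ?thesis by (rule subsp_eq_if_cosets_eq[OF W2(1) W])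
qed

end

lemma linpart_vzero: "linpart n {vzero} = {{v} | v. v \<in> Fv n}"
  by (auto simp: linpart_def coset_def)

lemma linpart_Fv: "linpart n (Fv n) = {Fv n}"
  using coset_subsp_self[OF subsp_Fv] by (auto simp: linpart_def intro!: exI[of _ vzero])

lemma wall_block_sum:
  assumes "0 < m" "I \<subseteq> {0..<b}" "\<not> trivial_part (m * b) (linpart (m * b) (block_sum m b I))"
  shows "wall m b (block_sum m b I)"
proof -
  have "I \<noteq> {}"
    using assms(3) by (auto simp: trivial_part_def block_sum_empty linpart_vzero)
  moreover have "I \<noteq> {0..<b}"
    using assms(1,3) by (auto simp: trivial_part_def block_sum_all linpart_Fv)
  ultimately show ?thesis
    using assms(2) unfolding wall_def block_sum_def by blast
qed

theorem lemma3p15: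
  fixes m b :: nat and g :: "nat \<Rightarrow> vec \<Rightarrow> vec" and W U W1 W2 :: "vec set"
  assumes "b > 1" and "m \<ge> 4"
    and perm: "\<forall>i<b. bij_betw (g i) (Fv m) (Fv m)"
    and zero: "par m b g vzero = vzero"
    and du: "\<forall>i<b. diff_unif m (g i) = 4"
    and nh: "\<forall>i<b. nhat m (g i) = 0"
    and W: "subsp (m * b) W"
    and U: "subsp (m * b) U" "sdim U = m * b - 1"
    and W12: "subsp (m * b) W1" "W1 \<subseteq> U" "subsp (m * b) W2" "W2 \<subseteq> U"
    and nontriv: "\<not> trivial_part (m * b) (LApart (m * b) U W1 W2)"
    and maps: "maps_onto (par m b g) (linpart (m * b) W) (LApart (m * b) U W1 W2)"
  shows "wall m b W \<and> wall m b W1 \<and> W = W1 \<and> W = W2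
         \<and> LApart (m * b) U W1 W2 = linpart (m * b) W1"
proof -
  have m: "0 < m" and n: "0 < m * b" using assms(1,2) by simp_all
  obtain vb where vb: "vb \<in> Fv (m * b) - U"
    and LA: "LApart (m * b) U W1 W2 = LApart_at U W1 W2 vb"
    using LApart_eq_LApart_at[OF U n] by blast
  have g_vzero: "g i vzero = vzero" if "i < b" for i
    using g_vzero_if_par_vzero[OF m that _ zero] bij_betwE[OF perm[rule_format, OF that]] by simp
  interpret LA_image m b g U W1 W2 vb W
    using m perm g_vzero U(1) W12 vb W nh maps LA by unfold_locales auto
  define I where "I = block_support m b W"
  have W_eq: "W = block_sum m b I"
    unfolding I_def by (rule W_eq_block_sum)
  have "I \<subseteq> {0..<b}"
    by (auto simp: I_def block_support_def)
  then have "wall m b W"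
    using wall_block_sum[OF m] nontriv by (simp add: LA LApart_at_eq_linpart W_eq)
  then show ?thesis
    using W_eq_W1 W2_eq_W LApart_at_eq_linpart LA by simp
qed

end
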